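(* Let $F$ be a non-abelian free group. For every integer $m\ge 5$ there exist subgroups $H,K\le F$ with $\operatorname{rk}(H)=\operatorname{rk}(K)=m$ and $\operatorname{rk}(H\cap K)\ge m$ but $\operatorname{rk}(H\vee K)>m$. In other words, Guzman's Group-Theoretic Conjecture fails for every $m\ge 5$.
   Context: $H\vee K$ denotes the subgroup generated by $H$ and $K$. Guzman's Group-Theoretic Conjecture for a given $m\ge2$ asserts: if two subgroups $H,K$ of a free group both have rank $m$ and $\operatorname{rk}(H\cap K)\ge m$, then $\operatorname{rk}(H\vee K)\le m$. *)

theory Defs
  imports "HOL-Algebra.Algebra" "HOL-Library.Extended_Nat"
begin

definition letter_val :: "('a, 'b) monoid_scheme \<Rightarrow> 'a \<times> bool \<Rightarrow> 'a" where
  "letter_val G l = (if snd l then fst l else inv\<^bsub>G\<^esub> (fst l))"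

definition word_val :: "('a, 'b) monoid_scheme \<Rightarrow> ('a \<times> bool) list \<Rightarrow> 'a" where
  "word_val G w = foldr (\<lambda>l acc. letter_val G l \<otimes>\<^bsub>G\<^esub> acc) w \<one>\<^bsub>G\<^esub>"

definition reduced_word :: "('a \<times> bool) list \<Rightarrow> bool" where
  "reduced_word w = (\<forall>i. Suc i < length w \<longrightarrow>
      \<not> (fst (w ! i) = fst (w ! Suc i) \<and> snd (w ! i) \<noteq> snd (w ! Suc i)))"

definition free_basis :: "('a, 'b) monoid_scheme \<Rightarrow> 'a set \<Rightarrow> bool" where
  "free_basis G B = (B \<subseteq> carrier G \<and> generate G B = carrier G \<and>
     (\<forall>w. 0 < length w \<and> set (map fst w) \<subseteq> B \<and> reduced_word w \<longrightarrow> word_val G w \<noteq> one G))"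

definition free_group :: "('a, 'b) monoid_scheme \<Rightarrow> bool" where
  "free_group G = (group G \<and> (\<exists>B. free_basis G B))"

definition grank :: "('a, 'b) monoid_scheme \<Rightarrow> 'a set \<Rightarrow> enat" where
  "grank G H = (INF S \<in> {S. S \<subseteq> H \<and> generate G S = H}.
                  (if finite S then enat (card S) else \<infinity>))"

end

(* Ranks are bounded below with Z/2-voltages. Let a subgroup J of F fix a vertex v of a covering
   graph of the bouquet of two circles whose edges carry labels in an elementary abelian 2-group
   (Z/2)^L. Summing labels along closed paths at v is a homomorphism J -> (Z/2)^L; a generating
   set of size k spans at most 2^k vectors, so if the image contains r independent vectors, then
   rk J >= r.

   With n = m - 5 and z_j = b a^j b a^-j b^-1 take H = <h_1, ..., h_5, z_1, ..., z_n> and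
   K = <k_1, ..., k_5, z_1, ..., z_n> for explicit words h_i, k_i in a and b. One cover for each
   subgroup gives rk H = rk K = m; on the product of these two covers, five explicit elements of
   the intersection together with the z_j give rk (H meet K) >= m; a third cover, whose vertex
   stabilizer contains both H and K, gives rk (H join K) >= m + 1. *)

theory Submission
  imports Defs
begin

section \<open>Words\<close>

lemma word_val_Nil [simp]: "word_val G [] = \<one>\<^bsub>G\<^esub>"
  by (simp add: word_val_def)

lemma word_val_Cons [simp]: "word_val G (l # w) = letter_val G l \<otimes>\<^bsub>G\<^esub> word_val G w"
  by (simp add: word_val_def)

lemma fst_image_apfst [simp]: "fst ` apfst f ` A = f ` fst ` A"
  by force

definition inv_word :: "('a \<times> bool) list \<Rightarrow> ('a \<times> bool) list" where
  "inv_word w = rev (map (apsnd Not) w)"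

lemma fst_set_inv_word [simp]: "fst ` set (inv_word w) = fst ` set w"
  by (force simp: inv_word_def)

definition subst_word :: "('j \<Rightarrow> ('a \<times> bool) list) \<Rightarrow> ('j \<times> bool) list \<Rightarrow> ('a \<times> bool) list" where
  "subst_word u e = concat (map (\<lambda>(j, t). if t then u j else inv_word (u j)) e)"

lemma fst_set_subst_word:
  assumes "\<And>j. fst ` set (u j) \<subseteq> S"
  shows "fst ` set (subst_word u e) \<subseteq> S"
proof (induction e)
  case (Cons l e)
  have "fst ` set (if snd l then u (fst l) else inv_word (u (fst l))) \<subseteq> S"
    using assms by simp
  with Cons show ?case
    by (simp add: subst_word_def split_beta image_Un del: image_subset_iff)
qed (simp add: subst_word_def)

context group
begin

lemma letter_val_closed: "fst l \<in> carrier G \<Longrightarrow> letter_val G l \<in> carrier G"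
  by (simp add: letter_val_def)

lemma word_val_closed: "fst ` set w \<subseteq> carrier G \<Longrightarrow> word_val G w \<in> carrier G"
  by (induction w) (auto simp: letter_val_closed)

lemma word_val_append:
  "fst ` set u \<subseteq> carrier G \<Longrightarrow> fst ` set w \<subseteq> carrier G \<Longrightarrow>
   word_val G (u @ w) = word_val G u \<otimes> word_val G w"
  by (induction u) (auto simp: letter_val_closed word_val_closed m_assoc)

lemma word_val_inv_word:
  assumes "fst ` set w \<subseteq> carrier G"
  shows "word_val G (inv_word w) = inv (word_val G w)"
  using assms
proof (induction w)
  case (Cons l w)
  have "letter_val G (apsnd Not l) = inv (letter_val G l)"
    using Cons.prems by (auto simp: letter_val_def)
  moreover have "fst ` set (inv_word w) \<subseteq> carrier G"
    using Cons.prems by (auto simp: inv_word_def)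
  ultimately show ?case
    using Cons
    by (simp add: inv_word_def word_val_append letter_val_closed word_val_closed inv_mult_group)
qed (simp add: inv_word_def)

lemma word_val_in_generate:
  assumes "S \<subseteq> carrier G" "fst ` set w \<subseteq> S"
  shows "word_val G w \<in> generate G S"
  using assms(2)
proof (induction w)
  case (Cons l w)
  then have "letter_val G l \<in> generate G S"
    by (auto simp: letter_val_def intro: generate.incl generate.inv)
  with Cons show ?case by (simp add: generate.eng)
qed (simp add: generate.one)

lemma generate_word_val:
  assumes "S \<subseteq> carrier G" "g \<in> generate G S"
  obtains w where "fst ` set w \<subseteq> S" "word_val G w = g"
proof -
  from assms(2) have "\<exists>w. fst ` set w \<subseteq> S \<and> word_val G w = g"
  proof induction
    case one
    show ?case by (rule exI[of _ "[]"]) simp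
  next
    case (incl h)
    then show ?case using assms(1) by (intro exI[of _ "[(h, True)]"]) (auto simp: letter_val_def)
  next
    case (inv h)
    then show ?case using assms(1) by (intro exI[of _ "[(h, False)]"]) (auto simp: letter_val_def)
  next
    case (eng h1 h2)
    then obtain w1 w2 where "fst ` set w1 \<subseteq> S" "word_val G w1 = h1"
      and "fst ` set w2 \<subseteq> S" "word_val G w2 = h2"
      by blast
    then show ?case using assms(1) by (intro exI[of _ "w1 @ w2"]) (auto simp: word_val_append)
  qed
  then show thesis using that by blast
qed

lemma word_val_subst_word:
  assumes "\<And>j. fst ` set (u j) \<subseteq> carrier G"
  shows "word_val G (subst_word u e) = word_val G (map (apfst (\<lambda>j. word_val G (u j))) e)"
proof (induction e)
  case (Cons l e)
  let ?x = "if snd l then u (fst l) else inv_word (u (fst l))"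
  have "subst_word u (l # e) = ?x @ subst_word u e"
    by (simp add: subst_word_def split_beta)
  moreover have "fst ` set ?x \<subseteq> carrier G" "fst ` set (subst_word u e) \<subseteq> carrier G"
    using assms by (simp, rule fst_set_subst_word)
  ultimately have "word_val G (subst_word u (l # e)) = word_val G ?x \<otimes> word_val G (subst_word u e)"
    by (simp add: word_val_append)
  also have "word_val G (if snd l then u (fst l) else inv_word (u (fst l))) =
      letter_val G (apfst (\<lambda>j. word_val G (u j)) l)"
    using assms[of "fst l"] by (simp add: word_val_inv_word letter_val_def)
  finally show ?case using Cons by simp
qed (simp add: subst_word_def)

end

definition cancels :: "'a \<times> bool \<Rightarrow> 'a \<times> bool \<Rightarrow> bool" where
  "cancels l l' \<longleftrightarrow> fst l = fst l' \<and> snd l \<noteq> snd l'"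

fun push_letter :: "'a \<times> bool \<Rightarrow> ('a \<times> bool) list \<Rightarrow> ('a \<times> bool) list" where
  "push_letter l [] = [l]"
| "push_letter l (l' # w) = (if cancels l l' then w else l # l' # w)"

definition reduce :: "('a \<times> bool) list \<Rightarrow> ('a \<times> bool) list" where
  "reduce w = foldr push_letter w []"

lemma reduce_Nil [simp]: "reduce [] = []"
  and reduce_Cons [simp]: "reduce (l # w) = push_letter l (reduce w)"
  by (simp_all add: reduce_def)

lemma set_reduce: "set (reduce w) \<subseteq> set w"
proof (induction w)
  case (Cons l w)
  have "set (push_letter l r) \<subseteq> insert l (set r)" for r
    by (cases r) auto
  with Cons show ?case by fastforce
qed simp

lemma reduced_word_Cons:
  "reduced_word (l # w) \<longleftrightarrow> reduced_word w \<and> (w = [] \<or> \<not> cancels l (hd w))"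
  by (cases w) (auto simp: reduced_word_def cancels_def nth_Cons' less_Suc_eq_0_disj split: if_splits)

lemma reduced_word_reduce: "reduced_word (reduce w)"
proof (induction w)
  case Nil
  show ?case by (simp add: reduced_word_def)
next
  case (Cons l w)
  then show ?case
    by (cases "reduce w") (auto simp: reduced_word_Cons)
qed

lemma (in group) word_val_reduce:
  assumes "f ` fst ` set w \<subseteq> carrier G"
  shows "word_val G (map (apfst f) (reduce w)) = word_val G (map (apfst f) w)"
  using assms
proof (induction w)
  case (Cons l w)
  have reduce_closed: "f ` fst ` set (reduce w) \<subseteq> carrier G"
    using Cons.prems set_reduce[of w] by auto
  have "word_val G (map (apfst f) (push_letter l r)) = word_val G (map (apfst f) (l # r))"
    if r: "f ` fst ` set r \<subseteq> carrier G" for r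
  proof (cases r)
    case (Cons l' r')
    have "letter_val G (apfst f l) \<otimes> (letter_val G (apfst f l') \<otimes> word_val G (map (apfst f) r'))
          = word_val G (map (apfst f) r')" if "cancels l l'"
    proof -
      have "letter_val G (apfst f l) \<otimes> letter_val G (apfst f l') = \<one>"
        using that Cons r by (cases l; cases l') (auto simp: cancels_def letter_val_def)
      moreover have "word_val G (map (apfst f) r') \<in> carrier G"
        using Cons r by (intro word_val_closed) (auto simp: image_subset_iff)
      ultimately show ?thesis
        using Cons r Cons.prems by (simp add: m_assoc[symmetric] letter_val_closed del: m_assoc)
    qed
    then show ?thesis using Cons by simp
  qed simp
  with Cons reduce_closed show ?case by simp
qed simp


lemma (in group) reduce_subst_word_in_generate:
  assumes "\<And>j. fst ` set (u j) \<subseteq> carrier G" "fst ` set e \<subseteq> I"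
  shows "word_val G (reduce (subst_word u e)) \<in> generate G ((\<lambda>j. word_val G (u j)) ` I)"
proof -
  have "fst ` set (subst_word u e) \<subseteq> carrier G"
    using assms(1) by (rule fst_set_subst_word)
  then have "word_val G (reduce (subst_word u e)) = word_val G (subst_word u e)"
    using word_val_reduce[of id "subst_word u e"] by simp
  also have "\<dots> = word_val G (map (apfst (\<lambda>j. word_val G (u j))) e)"
    using assms(1) by (rule word_val_subst_word)
  also have "\<dots> \<in> generate G ((\<lambda>j. word_val G (u j)) ` I)"
  proof (rule word_val_in_generate)
    show "(\<lambda>j. word_val G (u j)) ` I \<subseteq> carrier G"
      using assms(1) word_val_closed by blast
    show "fst ` set (map (apfst (\<lambda>j. word_val G (u j))) e) \<subseteq> (\<lambda>j. word_val G (u j)) ` I"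
      using assms(2) by (simp add: image_mono)
  qed
  finally show ?thesis .
qed

section \<open>Extending maps on a free basis\<close>

lemma free_basis_subset: "free_basis F B \<Longrightarrow> B \<subseteq> carrier F"
  by (simp add: free_basis_def)

definition free_extension ::
    "('a, 'b) monoid_scheme \<Rightarrow> 'a set \<Rightarrow> ('c, 'd) monoid_scheme \<Rightarrow> ('a \<Rightarrow> 'c) \<Rightarrow> 'a \<Rightarrow> 'c" where
  "free_extension F B T f g =
     word_val T (map (apfst f) (SOME w. fst ` set w \<subseteq> B \<and> word_val F w = g))"

context
  fixes F :: "('a, 'b) monoid_scheme" and B :: "'a set"
    and T :: "('c, 'd) monoid_scheme" and f :: "'a \<Rightarrow> 'c"
  assumes F: "group F" and basis: "free_basis F B" and T: "group T" and f: "f ` B \<subseteq> carrier T"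
begin

lemma free_basis_relation:
  assumes w: "fst ` set w \<subseteq> B" and one: "word_val F w = \<one>\<^bsub>F\<^esub>"
  shows "word_val T (map (apfst f) w) = \<one>\<^bsub>T\<^esub>"
proof -
  have "word_val F (reduce w) = \<one>\<^bsub>F\<^esub>"
    using group.word_val_reduce[OF F, of id w] w free_basis_subset[OF basis] one by auto
  moreover have "fst ` set (reduce w) \<subseteq> B"
    using set_reduce[of w] w by auto
  ultimately have "reduce w = []"
    using basis reduced_word_reduce[of w] unfolding free_basis_def by auto
  moreover have "f ` fst ` set w \<subseteq> carrier T"
    using w f by blast
  ultimately show ?thesis
    using group.word_val_reduce[OF T, of f w] by simp
qed

lemma free_basis_word_val_eq:
  assumes w1: "fst ` set w1 \<subseteq> B" and w2: "fst ` set w2 \<subseteq> B"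
    and eq: "word_val F w1 = word_val F w2"
  shows "word_val T (map (apfst f) w1) = word_val T (map (apfst f) w2)"
proof -
  interpret F: group F by (rule F)
  interpret T: group T by (rule T)
  have F_closed: "fst ` set w1 \<subseteq> carrier F" "fst ` set w2 \<subseteq> carrier F"
    "fst ` set (inv_word w2) \<subseteq> carrier F"
    using w1 w2 free_basis_subset[OF basis] by auto
  have "f ` fst ` set w1 \<subseteq> carrier T" "f ` fst ` set w2 \<subseteq> carrier T"
    using w1 w2 f by (meson image_mono order.trans)+
  then have T_closed: "fst ` set (map (apfst f) w1) \<subseteq> carrier T"
    "fst ` set (map (apfst f) w2) \<subseteq> carrier T"
    by simp_all
  have "word_val F (w1 @ inv_word w2) = \<one>\<^bsub>F\<^esub>"
    using eq F_closed by (simp add: F.word_val_append F.word_val_inv_word F.word_val_closed)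
  then have "word_val T (map (apfst f) (w1 @ inv_word w2)) = \<one>\<^bsub>T\<^esub>"
    using w1 w2 free_basis_relation[of "w1 @ inv_word w2"] by (simp add: image_Un)
  moreover have "map (apfst f) (inv_word w2) = inv_word (map (apfst f) w2)"
    by (simp add: inv_word_def rev_map)
  ultimately have "word_val T (map (apfst f) w1) \<otimes>\<^bsub>T\<^esub> inv\<^bsub>T\<^esub> word_val T (map (apfst f) w2) = \<one>\<^bsub>T\<^esub>"
    using T_closed by (simp add: T.word_val_append T.word_val_inv_word)
  then have "inv\<^bsub>T\<^esub> (inv\<^bsub>T\<^esub> word_val T (map (apfst f) w2)) = word_val T (map (apfst f) w1)"
    using T_closed by (intro T.inv_equality) (simp_all add: T.word_val_closed)
  then show ?thesis
    using T_closed by (simp add: T.word_val_closed)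
qed

lemma free_extension_word_val:
  assumes "fst ` set w \<subseteq> B"
  shows "free_extension F B T f (word_val F w) = word_val T (map (apfst f) w)"
proof -
  have "\<exists>w'. fst ` set w' \<subseteq> B \<and> word_val F w' = word_val F w"
    using assms by blast
  then have "fst ` set (SOME w'. fst ` set w' \<subseteq> B \<and> word_val F w' = word_val F w) \<subseteq> B \<and>
      word_val F (SOME w'. fst ` set w' \<subseteq> B \<and> word_val F w' = word_val F w) = word_val F w"
    by (rule someI_ex)
  then show ?thesis
    unfolding free_extension_def using assms by (blast intro: free_basis_word_val_eq)
qed

lemma free_extension_hom: "free_extension F B T f \<in> hom F T"
proof -
  interpret F: group F by (rule F)
  have word: "\<exists>w. fst ` set w \<subseteq> B \<and> word_val F w = x" if "x \<in> carrier F" for x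
    using F.generate_word_val[OF free_basis_subset[OF basis], of x] that basis
    by (auto simp: free_basis_def)
  show ?thesis
  proof (rule homI)
    fix x assume "x \<in> carrier F"
    then obtain u where u: "fst ` set u \<subseteq> B" "word_val F u = x"
      using word by blast
    then have "free_extension F B T f x = word_val T (map (apfst f) u)"
      using free_extension_word_val by blast
    moreover have "f ` fst ` set u \<subseteq> carrier T"
      using u(1) f by (meson image_mono order.trans)
    ultimately show "free_extension F B T f x \<in> carrier T"
      by (simp add: group.word_val_closed[OF T])
  next
    fix x y assume "x \<in> carrier F" "y \<in> carrier F"
    then obtain u v where u: "fst ` set u \<subseteq> B" "word_val F u = x"
      and v: "fst ` set v \<subseteq> B" "word_val F v = y"
      using word by blast
    have "free_extension F B T f (x \<otimes>\<^bsub>F\<^esub> y) = free_extension F B T f (word_val F (u @ v))"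
      using u v free_basis_subset[OF basis] by (auto simp: F.word_val_append)
    also have "\<dots> = word_val T (map (apfst f) u @ map (apfst f) v)"
      using u(1) v(1) free_extension_word_val[of "u @ v"] by (simp add: image_Un)
    also have "\<dots> = word_val T (map (apfst f) u) \<otimes>\<^bsub>T\<^esub> word_val T (map (apfst f) v)"
      using u(1) v(1) f by (intro group.word_val_append[OF T]) (simp_all, blast+)
    also have "\<dots> = free_extension F B T f x \<otimes>\<^bsub>T\<^esub> free_extension F B T f y"
      using u(1) v(1) by (simp add: free_extension_word_val u(2)[symmetric] v(2)[symmetric])
    finally show "free_extension F B T f (x \<otimes>\<^bsub>F\<^esub> y) =
        free_extension F B T f x \<otimes>\<^bsub>T\<^esub> free_extension F B T f y" .
  qed
qed

end

lemma (in group) free_basis_distinct_elements: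
  assumes basis: "free_basis G B" and nonabelian: "\<exists>x\<in>carrier G. \<exists>y\<in>carrier G. x \<otimes> y \<noteq> y \<otimes> x"
  shows "\<exists>a\<in>B. \<exists>b\<in>B. a \<noteq> b"
proof (rule ccontr)
  assume "\<not> ?thesis"
  moreover have "B \<subseteq> carrier G"
    using basis by (rule free_basis_subset)
  ultimately obtain c where c: "c \<in> carrier G" "B \<subseteq> {c}"
    using one_closed by (cases "B = {}") blast+
  have "carrier G = generate G B"
    using basis by (simp add: free_basis_def)
  also have "\<dots> \<subseteq> generate G {c}"
    using c(2) by (rule mono_generate)
  also have "\<dots> = {c [^] (k::int) | k. k \<in> UNIV}"
    using c(1) by (rule generate_pow)
  finally have cyclic: "carrier G \<subseteq> {c [^] (k::int) | k. k \<in> UNIV}" .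
  obtain x y where xy: "x \<in> carrier G" "y \<in> carrier G" "x \<otimes> y \<noteq> y \<otimes> x"
    using nonabelian by blast
  moreover obtain i j :: int where "x = c [^] i" "y = c [^] j"
    using cyclic xy(1,2) by blast
  ultimately show False
    using c(1) by (metis add.commute int_pow_mult)
qed

section \<open>Rank bounds from homomorphisms onto elementary abelian 2-groups\<close>

lemma grank_generate_le: "finite S \<Longrightarrow> grank G (generate G S) \<le> enat (card S)"
  unfolding grank_def by (rule INF_lower2[of S]) (auto intro: generate.incl)

inductive_set sym_diff_span :: "'l set set \<Rightarrow> 'l set set" for A where
  empty: "{} \<in> sym_diff_span A"
| step: "x \<in> A \<Longrightarrow> y \<in> sym_diff_span A \<Longrightarrow> sym_diff x y \<in> sym_diff_span A"

lemma sym_diff_span_base: "x \<in> A \<Longrightarrow> x \<in> sym_diff_span A"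
  using sym_diff_span.step[OF _ sym_diff_span.empty] by fastforce

lemma sym_diff_span_closed:
  "y \<in> sym_diff_span A \<Longrightarrow> z \<in> sym_diff_span A \<Longrightarrow> sym_diff y z \<in> sym_diff_span A"
proof (induction rule: sym_diff_span.induct)
  case (step x y)
  have "sym_diff (sym_diff x y) z = sym_diff x (sym_diff y z)"
    by blast
  with step show ?case by (simp add: sym_diff_span.step)
qed simp

lemma sym_diff_span_insert:
  "sym_diff_span (insert x A) \<subseteq> sym_diff_span A \<union> sym_diff x ` sym_diff_span A"
proof
  fix y assume "y \<in> sym_diff_span (insert x A)"
  then show "y \<in> sym_diff_span A \<union> sym_diff x ` sym_diff_span A"
  proof induction
    case empty
    show ?case by (simp add: sym_diff_span.empty)
  next
    case (step z y)
    consider "y \<in> sym_diff_span A" | y' where "y' \<in> sym_diff_span A" "y = sym_diff x y'"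
      using step.IH by blast
    then show ?case
    proof cases
      case 1
      then show ?thesis
        using step.hyps(1) by (auto intro: sym_diff_span.step)
    next
      case 2
      have "sym_diff x (sym_diff x y') = y'" "sym_diff z (sym_diff x y') = sym_diff x (sym_diff z y')"
        by blast+
      then show ?thesis
        using 2 step.hyps(1) by (auto intro: sym_diff_span.step)
    qed
  qed
qed

lemma sym_diff_span_card:
  fixes A :: "'l set set"
  shows "finite A \<Longrightarrow> finite (sym_diff_span A) \<and> card (sym_diff_span A) \<le> 2 ^ card A"
proof (induction rule: finite_induct)
  case empty
  have "sym_diff_span ({} :: 'l set set) = {{}}"
    by (auto elim: sym_diff_span.cases intro: sym_diff_span.empty)
  then show ?case by simp
next
  case (insert x A)
  let ?U = "sym_diff_span A \<union> sym_diff x ` sym_diff_span A"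
  have "finite ?U" using insert by simp
  have "card ?U \<le> card (sym_diff_span A) + card (sym_diff x ` sym_diff_span A)"
    by (rule card_Un_le)
  also have "\<dots> \<le> 2 * card (sym_diff_span A)"
    using card_image_le[of "sym_diff_span A" "sym_diff x"] insert by simp
  also have "\<dots> \<le> 2 ^ card (insert x A)"
    using insert by simp
  finally have "card ?U \<le> 2 ^ card (insert x A)" .
  with \<open>finite ?U\<close> show ?case
    using sym_diff_span_insert[of x A] by (meson card_mono finite_subset order.trans)
qed

context group
begin

context
  fixes Q :: "'a set" and \<chi> :: "'a \<Rightarrow> 'l set"
  assumes Q: "subgroup Q G"
    and \<chi>_mult: "\<And>g h. g \<in> Q \<Longrightarrow> h \<in> Q \<Longrightarrow> \<chi> (g \<otimes> h) = sym_diff (\<chi> g) (\<chi> h)"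
begin

lemma sym_diff_hom_one: "\<chi> \<one> = {}"
  using \<chi>_mult[of \<one> \<one>] subgroup.one_closed[OF Q] by simp

lemma sym_diff_hom_inv:
  assumes g: "g \<in> Q"
  shows "\<chi> (inv g) = \<chi> g"
proof -
  have "inv g \<in> Q" "g \<in> carrier G"
    using g subgroup.m_inv_closed[OF Q] subgroup.mem_carrier[OF Q] by auto
  then have "sym_diff (\<chi> (inv g)) (\<chi> g) = {}"
    using \<chi>_mult[of "inv g" g] g sym_diff_hom_one by simp
  then show ?thesis by blast
qed

lemma sym_diff_hom_generate:
  assumes S: "S \<subseteq> Q" and g: "g \<in> generate G S"
  shows "\<chi> g \<in> sym_diff_span (\<chi> ` S)"
  using g
proof induction
  case one
  show ?case by (simp add: sym_diff_hom_one sym_diff_span.empty)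
next
  case (incl h)
  then show ?case by (simp add: sym_diff_span_base)
next
  case (inv h)
  then show ?case using S by (simp add: sym_diff_hom_inv subsetD sym_diff_span_base)
next
  case (eng g h)
  have "generate G S \<subseteq> Q"
    using generate_subgroup_incl[OF S Q] .
  with eng have "\<chi> (g \<otimes> h) = sym_diff (\<chi> g) (\<chi> h)"
    by (intro \<chi>_mult) blast+
  with eng.IH show ?case
    by (simp add: sym_diff_span_closed)
qed

lemma Pow_subset_sym_diff_hom_image:
  assumes J: "subgroup J G" "J \<subseteq> Q" and R: "finite R"
    and singletons: "\<And>r. r \<in> R \<Longrightarrow> \<exists>g\<in>J. \<chi> g = {r}"
  shows "Pow R \<subseteq> \<chi> ` J"
proof
  fix U assume "U \<in> Pow R"
  then have "U \<subseteq> R" "finite U" using R finite_subset by auto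
  then show "U \<in> \<chi> ` J"
  proof (induction rule: finite_induct[OF \<open>finite U\<close>])
    case 1
    show ?case
      using subgroup.one_closed[OF J(1)] sym_diff_hom_one by (metis image_eqI)
  next
    case (2 r U)
    obtain g h where g: "g \<in> J" "\<chi> g = {r}" and h: "h \<in> J" "\<chi> h = U"
      using 2 singletons by blast
    have "g \<otimes> h \<in> J"
      using g(1) h(1) J(1) by (simp add: subgroup.m_closed)
    moreover have "\<chi> (g \<otimes> h) = insert r U"
      using \<chi>_mult[of g h] g h J(2) \<open>r \<notin> U\<close> by auto
    ultimately show ?case
      by (metis image_eqI)
  qed
qed

lemma grank_ge_card_singleton_images:
  assumes J: "J \<subseteq> Q" and R: "finite R" and singletons: "\<And>r. r \<in> R \<Longrightarrow> \<exists>g\<in>J. \<chi> g = {r}"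
  shows "enat (card R) \<le> grank G J"
  unfolding grank_def
proof (rule INF_greatest)
  fix S assume "S \<in> {S. S \<subseteq> J \<and> generate G S = J}"
  then have S: "S \<subseteq> Q" and gen: "generate G S = J"
    using J by auto
  show "enat (card R) \<le> (if finite S then enat (card S) else \<infinity>)"
  proof (cases "finite S")
    case True
    have "subgroup J G"
      using gen S subgroup.subset[OF Q] generate_is_subgroup by blast
    then have "Pow R \<subseteq> sym_diff_span (\<chi> ` S)"
      using Pow_subset_sym_diff_hom_image[OF _ J R singletons] sym_diff_hom_generate[OF S] gen by blast
    moreover have "finite (sym_diff_span (\<chi> ` S))" "card (sym_diff_span (\<chi> ` S)) \<le> 2 ^ card (\<chi> ` S)"
      using sym_diff_span_card[of "\<chi> ` S"] True by auto
    ultimately have "card (Pow R) \<le> 2 ^ card (\<chi> ` S)"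
      by (meson card_mono order.trans)
    also have "\<dots> \<le> 2 ^ card S"
      using card_image_le[OF True, of \<chi>] by (simp add: power_increasing)
    finally show ?thesis
      using R True by (simp add: card_Pow)
  qed simp
qed

end

end

section \<open>Voltage covers of the bouquet of two circles\<close>

abbreviation BG :: "('s \<Rightarrow> 's) monoid" where "BG \<equiv> BijGroup UNIV"

lemma BijGroup_UNIV_carrier: "carrier BG = {f. bij f}"
  by (auto simp: BijGroup_def Bij_def extensional_def)

lemma BijGroup_UNIV_mult: "f \<in> carrier BG \<Longrightarrow> g \<in> carrier BG \<Longrightarrow> f \<otimes>\<^bsub>BG\<^esub> g = f \<circ> g"
  by (simp add: BijGroup_def compose_def restrict_def fun_eq_iff)

lemma BijGroup_UNIV_one: "\<one>\<^bsub>BG\<^esub> = id"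
  by (simp add: BijGroup_def restrict_def fun_eq_iff)

lemma BijGroup_UNIV_inv:
  assumes "g \<circ> f = id" "f \<circ> g = id"
  shows "inv\<^bsub>BG\<^esub> f = g"
  using assms o_bij[of g f] o_bij[of f g]
  by (intro group.inv_equality[OF group_BijGroup])
     (auto simp: BijGroup_UNIV_carrier BijGroup_UNIV_mult BijGroup_UNIV_one)

(* Letters are coded 0, 1, 2, 3 for a, b, a^-1, b^-1, and s c permutes the vertices along the
   edges of letter c. *)
definition cover :: "(nat \<Rightarrow> 'v \<Rightarrow> 'v) \<Rightarrow> bool" where
  "cover s \<longleftrightarrow> (\<forall>v. s 2 (s 0 v) = v \<and> s 0 (s 2 v) = v \<and> s 3 (s 1 v) = v \<and> s 1 (s 3 v) = v)"

(* la v and lb v are the labels of the a-edge and of the b-edge leaving v. A set of labels is a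
   vector of (Z/2)^L, and crossing an edge adds its label by symmetric difference. *)
definition edge_voltage ::
    "(nat \<Rightarrow> 'v \<Rightarrow> 'v) \<Rightarrow> ('v \<Rightarrow> 'l set) \<Rightarrow> ('v \<Rightarrow> 'l set) \<Rightarrow> nat \<Rightarrow> 'v \<Rightarrow> 'l set" where
  "edge_voltage s la lb c v =
     (if c = 0 then la v else if c = 1 then lb v else if c = 2 then la (s 2 v) else lb (s 3 v))"

definition cover_step ::
    "(nat \<Rightarrow> 'v \<Rightarrow> 'v) \<Rightarrow> ('v \<Rightarrow> 'l set) \<Rightarrow> ('v \<Rightarrow> 'l set) \<Rightarrow> nat \<Rightarrow> 'v \<times> 'l set \<Rightarrow> 'v \<times> 'l set" where
  "cover_step s la lb c x = (s c (fst x), sym_diff (snd x) (edge_voltage s la lb c (fst x)))"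

fun cover_walk ::
    "(nat \<Rightarrow> 'v \<Rightarrow> 'v) \<Rightarrow> ('v \<Rightarrow> 'l set) \<Rightarrow> ('v \<Rightarrow> 'l set) \<Rightarrow> nat list \<Rightarrow> 'v \<times> 'l set \<Rightarrow> 'v \<times> 'l set" where
  "cover_walk s la lb [] x = x"
| "cover_walk s la lb (c # cs) x = cover_step s la lb c (cover_walk s la lb cs x)"

fun vertex_walk :: "(nat \<Rightarrow> 'v \<Rightarrow> 'v) \<Rightarrow> nat list \<Rightarrow> 'v \<Rightarrow> 'v" where
  "vertex_walk s [] v = v"
| "vertex_walk s (c # cs) v = s c (vertex_walk s cs v)"

lemma cover_walk_append:
  "cover_walk s la lb (cs @ ds) x = cover_walk s la lb cs (cover_walk s la lb ds x)"
  by (induction cs) auto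

lemma fst_cover_walk: "fst (cover_walk s la lb cs x) = vertex_walk s cs (fst x)"
  by (induction cs) (auto simp: cover_step_def)

lemma snd_cover_walk:
  "snd (cover_walk s la lb cs (v, U)) = sym_diff U (snd (cover_walk s la lb cs (v, {})))"
  by (induction cs) (auto simp: cover_step_def fst_cover_walk)

lemma cover_step_inverse:
  assumes "cover s"
  shows "cover_step s la lb 2 \<circ> cover_step s la lb 0 = id"
    and "cover_step s la lb 0 \<circ> cover_step s la lb 2 = id"
    and "cover_step s la lb 3 \<circ> cover_step s la lb 1 = id"
    and "cover_step s la lb 1 \<circ> cover_step s la lb 3 = id"
  using assms by (auto simp: fun_eq_iff cover_step_def edge_voltage_def cover_def)

definition prod_cover :: "(nat \<Rightarrow> 'v \<Rightarrow> 'v) \<Rightarrow> (nat \<Rightarrow> 'u \<Rightarrow> 'u) \<Rightarrow> nat \<Rightarrow> 'v \<times> 'u \<Rightarrow> 'v \<times> 'u" where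
  "prod_cover s t c x = (s c (fst x), t c (snd x))"

lemma cover_prod_cover: "cover s \<Longrightarrow> cover t \<Longrightarrow> cover (prod_cover s t)"
  by (simp add: cover_def prod_cover_def)

lemma vertex_walk_prod_cover:
  "vertex_walk (prod_cover s t) cs (v, u) = (vertex_walk s cs v, vertex_walk t cs u)"
  by (induction cs) (auto simp: prod_cover_def)

(* The word b a^j b a^-j b^-1 (a walk applies the rightmost letter first). *)
definition z_code :: "nat \<Rightarrow> nat list" where
  "z_code j = [1] @ replicate j 0 @ [1] @ replicate j 2 @ [3]"

lemma z_code_codes: "\<forall>c\<in>set (z_code j). c < 4"
  by (auto simp: z_code_def)

lemma map_eq_map_upt_witness:
  assumes "map f xs = map g [0..<n]" "i < n"
  shows "\<exists>x\<in>set xs. f x = g i"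
proof -
  have "length xs = n"
    using arg_cong[OF assms(1), of length] by simp
  then have "xs ! i \<in> set xs" "f (xs ! i) = map f xs ! i"
    using assms(2) by simp_all
  moreover have "map f xs ! i = g i"
    using assms by simp
  ultimately show ?thesis by metis
qed

lemma walk_map_vertex:
  assumes "map (\<lambda>w. cover_walk s la lb w (v, {})) W = map (\<lambda>i. (v, U i)) xs"
  shows "\<forall>w\<in>set W. fst (cover_walk s la lb w (v, {})) = v"
proof
  fix w assume "w \<in> set W"
  then have "cover_walk s la lb w (v, {}) \<in> set (map (\<lambda>i. (v, U i)) xs)"
    unfolding assms[symmetric] by simp
  then show "fst (cover_walk s la lb w (v, {})) = v" by auto
qed

locale free_basis_pair = group F for F :: "('a, 'b) monoid_scheme" (structure) +
  fixes B :: "'a set" and a b :: 'a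
  assumes free_basis: "free_basis F B" and a_in_B: "a \<in> B" and b_in_B: "b \<in> B" and a_ne_b: "a \<noteq> b"
begin

lemma B_subset: "B \<subseteq> carrier F"
  using free_basis by (rule free_basis_subset)

lemma carrier_word:
  assumes "g \<in> carrier F"
  obtains w where "fst ` set w \<subseteq> B" "word_val F w = g"
  using generate_word_val[OF B_subset] assms free_basis by (auto simp: free_basis_def)

definition letter_codes :: "'a \<times> bool \<Rightarrow> nat list" where
  "letter_codes l =
     (if fst l = a then [if snd l then 0 else 2]
      else if fst l = b then [if snd l then 1 else 3] else [])"

definition code_word :: "nat list \<Rightarrow> ('a \<times> bool) list" where
  "code_word cs = map (\<lambda>c. (if even c then a else b, c < 2)) cs"

lemma code_word_in_B: "fst ` set (code_word cs) \<subseteq> B"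
  using a_in_B b_in_B by (auto simp: code_word_def)

lemma code_word_closed: "word_val F (code_word cs) \<in> carrier F"
  using code_word_in_B B_subset by (intro word_val_closed) blast

lemma letter_codes_code_word: "\<forall>c\<in>set cs. c < 4 \<Longrightarrow> concat (map letter_codes (code_word cs)) = cs"
proof (induction cs)
  case (Cons c cs)
  then have "c = 0 \<or> c = 1 \<or> c = 2 \<or> c = 3" by auto
  with Cons a_ne_b show ?case by (auto simp: code_word_def letter_codes_def)
qed (simp add: code_word_def)

definition letter_perm ::
    "(nat \<Rightarrow> 'v \<Rightarrow> 'v) \<Rightarrow> ('v \<Rightarrow> 'l set) \<Rightarrow> ('v \<Rightarrow> 'l set) \<Rightarrow> 'a \<Rightarrow> 'v \<times> 'l set \<Rightarrow> 'v \<times> 'l set" where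
  "letter_perm s la lb x =
     (if x = a then cover_step s la lb 0 else if x = b then cover_step s la lb 1 else id)"

definition cover_act ::
    "(nat \<Rightarrow> 'v \<Rightarrow> 'v) \<Rightarrow> ('v \<Rightarrow> 'l set) \<Rightarrow> ('v \<Rightarrow> 'l set) \<Rightarrow> 'a \<Rightarrow> 'v \<times> 'l set \<Rightarrow> 'v \<times> 'l set" where
  "cover_act s la lb = free_extension F B BG (letter_perm s la lb)"

definition stabilizer :: "(nat \<Rightarrow> 'v \<Rightarrow> 'v) \<Rightarrow> ('v \<Rightarrow> 'l set) \<Rightarrow> ('v \<Rightarrow> 'l set) \<Rightarrow> 'v \<Rightarrow> 'a set" where
  "stabilizer s la lb v = {g \<in> carrier F. fst (cover_act s la lb g (v, {})) = v}"

definition voltage :: "(nat \<Rightarrow> 'v \<Rightarrow> 'v) \<Rightarrow> ('v \<Rightarrow> 'l set) \<Rightarrow> ('v \<Rightarrow> 'l set) \<Rightarrow> 'v \<Rightarrow> 'a \<Rightarrow> 'l set" where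
  "voltage s la lb v g = snd (cover_act s la lb g (v, {}))"

context
  fixes s :: "nat \<Rightarrow> 'v \<Rightarrow> 'v" and la lb :: "'v \<Rightarrow> 'l set"
  assumes cover: "cover s"
begin

lemma letter_perm_bij: "letter_perm s la lb x \<in> carrier BG"
  using cover_step_inverse[OF cover, of la lb] o_bij
  by (auto simp: BijGroup_UNIV_carrier letter_perm_def)

lemma letter_val_letter_perm:
  "letter_val BG (letter_perm s la lb x, e) = cover_walk s la lb (letter_codes (x, e))"
proof -
  have "inv\<^bsub>BG\<^esub> (letter_perm s la lb x) =
      (if x = a then cover_step s la lb 2 else if x = b then cover_step s la lb 3 else id)"
    using cover_step_inverse[OF cover, of la lb] a_ne_b
    by (simp add: letter_perm_def BijGroup_UNIV_inv)
  then show ?thesis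
    by (auto simp: letter_val_def letter_perm_def letter_codes_def fun_eq_iff)
qed

lemma word_val_letter_perm:
  "word_val BG (map (apfst (letter_perm s la lb)) w) =
   cover_walk s la lb (concat (map letter_codes w))"
proof (induction w)
  case Nil
  show ?case by (simp add: BijGroup_UNIV_one fun_eq_iff)
next
  case (Cons l w)
  let ?l = "letter_val BG (letter_perm s la lb (fst l), snd l)"
  let ?w = "word_val BG (map (apfst (letter_perm s la lb)) w)"
  have "?w \<in> carrier BG"
    using letter_perm_bij by (intro group.word_val_closed[OF group_BijGroup]) auto
  moreover have "?l \<in> carrier BG"
    using letter_perm_bij by (intro group.letter_val_closed[OF group_BijGroup]) auto
  ultimately have "word_val BG (map (apfst (letter_perm s la lb)) (l # w)) = ?l \<circ> ?w"
    by (cases l) (simp add: BijGroup_UNIV_mult)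
  with Cons show ?case
    by (cases l) (simp add: letter_val_letter_perm cover_walk_append fun_eq_iff)
qed

lemma cover_act_hom: "cover_act s la lb \<in> hom F BG"
  unfolding cover_act_def using letter_perm_bij
  by (intro free_extension_hom is_group free_basis group_BijGroup) auto

lemma cover_act_word_val:
  "fst ` set w \<subseteq> B \<Longrightarrow>
   cover_act s la lb (word_val F w) = cover_walk s la lb (concat (map letter_codes w))"
  unfolding cover_act_def using letter_perm_bij
  by (simp add: free_extension_word_val[OF is_group free_basis group_BijGroup] image_subset_iff
      word_val_letter_perm)

lemma cover_act_code_word:
  "\<forall>c\<in>set cs. c < 4 \<Longrightarrow> cover_act s la lb (word_val F (code_word cs)) = cover_walk s la lb cs"
  using cover_act_word_val[OF code_word_in_B] letter_codes_code_word by simp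

lemma cover_act_carrier: "g \<in> carrier F \<Longrightarrow> cover_act s la lb g \<in> carrier BG"
  using cover_act_hom by (simp add: hom_in_carrier)

lemma cover_act_mult:
  "g \<in> carrier F \<Longrightarrow> h \<in> carrier F \<Longrightarrow>
   cover_act s la lb (g \<otimes> h) = cover_act s la lb g \<circ> cover_act s la lb h"
  using cover_act_hom cover_act_carrier by (simp add: hom_mult BijGroup_UNIV_mult)

lemma cover_act_one: "cover_act s la lb \<one> = id"
proof -
  interpret group_hom F BG "cover_act s la lb"
    using cover_act_hom is_group group_BijGroup by (simp add: group_hom_def group_hom_axioms_def)
  show ?thesis using hom_one BijGroup_UNIV_one by simp
qed

lemma cover_act_affine:
  assumes "g \<in> carrier F"
  shows "cover_act s la lb g (v, U) =
    (fst (cover_act s la lb g (v, {})), sym_diff U (snd (cover_act s la lb g (v, {}))))"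
proof -
  obtain w where w: "fst ` set w \<subseteq> B" "word_val F w = g"
    using carrier_word assms by blast
  show ?thesis
    using cover_act_word_val[OF w(1)] snd_cover_walk[of s la lb _ v U]
    by (simp add: w(2)[symmetric] prod_eq_iff fst_cover_walk)
qed

lemma cover_act_stabilizer:
  "g \<in> stabilizer s la lb v \<Longrightarrow> cover_act s la lb g (v, U) = (v, sym_diff U (voltage s la lb v g))"
  using cover_act_affine[of g v U] by (simp add: stabilizer_def voltage_def)

lemma stabilizer_mult:
  assumes g: "g \<in> stabilizer s la lb v" and h: "h \<in> stabilizer s la lb v"
  shows "g \<otimes> h \<in> stabilizer s la lb v"
    and "voltage s la lb v (g \<otimes> h) = sym_diff (voltage s la lb v h) (voltage s la lb v g)"
proof -
  have carrier: "g \<in> carrier F" "h \<in> carrier F"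
    using g h by (auto simp: stabilizer_def)
  have "cover_act s la lb (g \<otimes> h) (v, {}) = cover_act s la lb g (cover_act s la lb h (v, {}))"
    using cover_act_mult[OF carrier] by simp
  also have "cover_act s la lb h (v, {}) = (v, voltage s la lb v h)"
    using cover_act_stabilizer[OF h, of "{}"] by simp
  also have "cover_act s la lb g \<dots> = (v, sym_diff (voltage s la lb v h) (voltage s la lb v g))"
    by (rule cover_act_stabilizer[OF g])
  finally have "cover_act s la lb (g \<otimes> h) (v, {}) =
      (v, sym_diff (voltage s la lb v h) (voltage s la lb v g))" .
  then show "g \<otimes> h \<in> stabilizer s la lb v"
    and "voltage s la lb v (g \<otimes> h) = sym_diff (voltage s la lb v h) (voltage s la lb v g)"
    using carrier by (simp_all add: stabilizer_def voltage_def)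
qed

lemma subgroup_stabilizer: "subgroup (stabilizer s la lb v) F"
proof (rule subgroupI)
  show "stabilizer s la lb v \<subseteq> carrier F" "stabilizer s la lb v \<noteq> {}"
    using cover_act_one by (auto simp: stabilizer_def)
next
  fix g assume g: "g \<in> stabilizer s la lb v"
  then have "cover_act s la lb (inv g) (cover_act s la lb g (v, {})) = (v, {})"
    using cover_act_mult[of "inv g" g] cover_act_one by (simp add: stabilizer_def fun_eq_iff)
  then show "inv g \<in> stabilizer s la lb v"
    using g cover_act_stabilizer[OF g] cover_act_affine[of "inv g" v "voltage s la lb v g"]
    by (auto simp: stabilizer_def prod_eq_iff)
next
  show "g \<otimes> h \<in> stabilizer s la lb v" if "g \<in> stabilizer s la lb v" "h \<in> stabilizer s la lb v" for g h
    using stabilizer_mult that by blast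
qed

lemma code_word_stabilizer:
  assumes "\<forall>c\<in>set cs. c < 4" "cover_walk s la lb cs (v, {}) = (v, U)"
  shows "word_val F (code_word cs) \<in> stabilizer s la lb v"
    and "voltage s la lb v (word_val F (code_word cs)) = U"
  using assms cover_act_code_word code_word_closed by (auto simp: stabilizer_def voltage_def)

lemma grank_ge_card_voltages:
  assumes "J \<subseteq> stabilizer s la lb v" "finite R" "\<And>r. r \<in> R \<Longrightarrow> \<exists>g\<in>J. voltage s la lb v g = {r}"
  shows "enat (card R) \<le> grank F J"
  using subgroup_stabilizer stabilizer_mult(2) assms
  by (intro grank_ge_card_singleton_images[of "stabilizer s la lb v" "voltage s la lb v"])
     (auto simp: Un_commute)

end

lemma stabilizer_prod_cover:
  assumes "cover s" "cover t"
  shows "stabilizer s la lb v \<inter> stabilizer t la' lb' u \<subseteq> stabilizer (prod_cover s t) ma mb (v, u)"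
proof
  fix g assume g: "g \<in> stabilizer s la lb v \<inter> stabilizer t la' lb' u"
  then have "g \<in> carrier F"
    using assms by (auto simp: stabilizer_def)
  then obtain w where w: "fst ` set w \<subseteq> B" "word_val F w = g"
    using carrier_word by blast
  show "g \<in> stabilizer (prod_cover s t) ma mb (v, u)"
    using g assms cover_prod_cover[OF assms] \<open>g \<in> carrier F\<close>
    by (simp add: stabilizer_def w(2)[symmetric] cover_act_word_val[OF _ w(1)] fst_cover_walk
        vertex_walk_prod_cover)
qed

definition z_gen :: "nat \<Rightarrow> 'a" where
  "z_gen j = word_val F (code_word (z_code j))"

definition code_subgroup :: "nat list list \<Rightarrow> nat \<Rightarrow> 'a set" where
  "code_subgroup W n = generate F ((\<lambda>w. word_val F (code_word w)) ` set W \<union> z_gen ` {1..n})"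

lemma subgroup_code_subgroup: "subgroup (code_subgroup W n) F"
  unfolding code_subgroup_def z_gen_def using code_word_closed
  by (intro generate_is_subgroup) auto

lemma grank_ge_voltages:
  assumes cover: "cover s" and J: "J \<subseteq> stabilizer s la lb v"
    and finite_part: "\<And>i. i < k \<Longrightarrow> \<exists>g\<in>J. voltage s la lb v g = {Inl (Suc i)}"
    and ray_part: "\<And>j. j \<in> {1..n} \<Longrightarrow> \<exists>g\<in>J. voltage s la lb v g = {Inr j}"
  shows "enat (k + n) \<le> grank F J"
proof -
  let ?R = "Inl ` {1..k} \<union> Inr ` {1..n}"
  have "card ?R = k + n"
    by (subst card_Un_disjoint) (auto simp: card_image)
  moreover have "\<exists>g\<in>J. voltage s la lb v g = {r}" if r: "r \<in> ?R" for r
  proof -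
    consider x where "r = Inl x" "x \<in> {1..k}" | j where "r = Inr j" "j \<in> {1..n}"
      using r by blast
    then show ?thesis
    proof cases
      case 1
      then have "x - 1 < k" "Suc (x - 1) = x" by auto
      then show ?thesis using 1 finite_part by metis
    qed (use ray_part in blast)
  qed
  ultimately show ?thesis
    using grank_ge_card_voltages[OF cover J, of ?R] by simp
qed

lemma grank_code_subgroup_le: "grank F (code_subgroup W n) \<le> enat (length W + n)"
proof -
  let ?S = "(\<lambda>w. word_val F (code_word w)) ` set W \<union> z_gen ` {1..n}"
  have "card ?S \<le> card ((\<lambda>w. word_val F (code_word w)) ` set W) + card (z_gen ` {1..n})"
    by (rule card_Un_le)
  also have "\<dots> \<le> card (set W) + card {1..n}"
    by (intro add_mono card_image_le) simp_all
  also have "\<dots> \<le> length W + n"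
    using card_length[of W] by simp
  finally have "enat (card ?S) \<le> enat (length W + n)"
    by simp
  moreover have "grank F (generate F ?S) \<le> enat (card ?S)"
    by (rule grank_generate_le) simp
  ultimately show ?thesis
    unfolding code_subgroup_def by (meson order.trans)
qed

context
  fixes s :: "nat \<Rightarrow> 'v \<Rightarrow> 'v" and la lb :: "'v \<Rightarrow> (nat + nat) set" and v :: 'v
  assumes cover: "cover s"
    and z_walk: "\<And>j. 0 < j \<Longrightarrow> cover_walk s la lb (z_code j) (v, {}) = (v, {Inr j})"
begin

lemma z_gen_stabilizer:
  "0 < j \<Longrightarrow> z_gen j \<in> stabilizer s la lb v \<and> voltage s la lb v (z_gen j) = {Inr j}"
  unfolding z_gen_def using code_word_stabilizer[OF cover z_code_codes z_walk] by blast

lemma code_subgroup_stabilizer: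
  assumes codes: "\<forall>w\<in>set W. \<forall>c\<in>set w. c < 4"
    and vertex: "\<forall>w\<in>set W. fst (cover_walk s la lb w (v, {})) = v"
  shows "code_subgroup W n \<subseteq> stabilizer s la lb v"
  unfolding code_subgroup_def
proof (rule generate_subgroup_incl[OF _ subgroup_stabilizer[OF cover]], safe)
  fix w assume "w \<in> set W"
  then show "word_val F (code_word w) \<in> stabilizer s la lb v"
    using codes vertex code_word_stabilizer[OF cover, where la = la and lb = lb and cs = w and v = v
      and U = "snd (cover_walk s la lb w (v, {}))"]
    by (simp add: prod_eq_iff)
next
  fix j assume "j \<in> {1..n}"
  then show "z_gen j \<in> stabilizer s la lb v"
    using z_gen_stabilizer by simp
qed

lemma grank_code_subgroup:
  assumes codes: "\<forall>w\<in>set W. \<forall>c\<in>set w. c < 4"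
    and walk: "map (\<lambda>w. cover_walk s la lb w (v, {})) W = map (\<lambda>i. (v, {Inl (Suc i)})) [0..<k]"
  shows "grank F (code_subgroup W n) = enat (k + n)"
proof (rule antisym)
  have "length W = k"
    using arg_cong[OF walk, of length] by simp
  then show "grank F (code_subgroup W n) \<le> enat (k + n)"
    using grank_code_subgroup_le[of W n] by simp
  let ?S = "(\<lambda>w. word_val F (code_word w)) ` set W \<union> z_gen ` {1..n}"
  have vertex: "\<forall>w\<in>set W. fst (cover_walk s la lb w (v, {})) = v"
    using walk by (rule walk_map_vertex)
  have gens: "?S \<subseteq> code_subgroup W n"
    unfolding code_subgroup_def by (blast intro: generate.incl)
  show "enat (k + n) \<le> grank F (code_subgroup W n)"
  proof (rule grank_ge_voltages[OF cover code_subgroup_stabilizer[OF codes vertex]])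
    fix i assume "i < k"
    then obtain w where w: "w \<in> set W" "cover_walk s la lb w (v, {}) = (v, {Inl (Suc i)})"
      using map_eq_map_upt_witness[OF walk] by blast
    then have "voltage s la lb v (word_val F (code_word w)) = {Inl (Suc i)}"
      using code_word_stabilizer[OF cover] codes by blast
    moreover have "word_val F (code_word w) \<in> code_subgroup W n"
      using w(1) gens by blast
    ultimately show "\<exists>g\<in>code_subgroup W n. voltage s la lb v g = {Inl (Suc i)}"
      by blast
  next
    fix j assume "j \<in> {1..n}"
    moreover from this have "z_gen j \<in> code_subgroup W n"
      using gens by blast
    ultimately show "\<exists>g\<in>code_subgroup W n. voltage s la lb v g = {Inr j}"
      using z_gen_stabilizer[of j] by auto
  qed
qed

end

lemma code_word_in_code_subgroup:
  assumes words: "map (\<lambda>e. reduce (subst_word (\<lambda>j. code_word (W ! j)) e)) E = map code_word V"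
    and indices: "\<forall>e\<in>set E. fst ` set e \<subseteq> {..<length W}" and "w \<in> set V"
  shows "word_val F (code_word w) \<in> code_subgroup W n"
proof -
  obtain e where e: "e \<in> set E" "code_word w = reduce (subst_word (\<lambda>j. code_word (W ! j)) e)"
    using arg_cong[OF words, of set] \<open>w \<in> set V\<close> by (auto simp: image_iff)
  have "word_val F (code_word w) \<in> generate F ((\<lambda>j. word_val F (code_word (W ! j))) ` {..<length W})"
    unfolding e(2) using code_word_in_B B_subset indices e(1)
    by (intro reduce_subst_word_in_generate) blast+
  also have "\<dots> \<subseteq> code_subgroup W n"
    unfolding code_subgroup_def by (rule mono_generate) (auto simp: image_iff)
  finally show ?thesis .
qed

end

section \<open>Covers given by permutation tables\<close>

(* The vertices Inl i with i < n form a finite cover given by the tables P0, P1, P2, P3 (the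
   actions of the four letters), except that the b-edge from P3 ! 0 to 0 is subdivided by the
   vertex Inr 0 of a line Inr j (j :: int) of a-edges with a b-loop at every Inr j. The vertices
   Inl i with i >= n are fixed junk. *)
definition table_cover ::
    "nat \<Rightarrow> nat list \<Rightarrow> nat list \<Rightarrow> nat list \<Rightarrow> nat list \<Rightarrow> nat \<Rightarrow> nat + int \<Rightarrow> nat + int" where
  "table_cover n P0 P1 P2 P3 c v = (case v of
     Inl i \<Rightarrow>
       if n \<le> i then Inl i
       else if c = 0 then Inl (P0 ! i) else if c = 2 then Inl (P2 ! i)
       else if c = 1 then (if i = P3 ! 0 then Inr 0 else Inl (P1 ! i))
       else (if i = 0 then Inr 0 else Inl (P3 ! i))
   | Inr j \<Rightarrow>
       if c = 0 then Inr (j - 1) else if c = 2 then Inr (j + 1)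
       else if c = 1 then (if j = 0 then Inl 0 else Inr j)
       else (if j = 0 then Inl (P3 ! 0) else Inr j))"

definition inverse_tables :: "nat \<Rightarrow> nat list \<Rightarrow> nat list \<Rightarrow> nat list \<Rightarrow> nat list \<Rightarrow> bool" where
  "inverse_tables n P0 P1 P2 P3 \<longleftrightarrow> 0 < n \<and> (\<forall>i<n. P0 ! i < n \<and> P1 ! i < n \<and> P2 ! i < n \<and> P3 ! i < n \<and>
     P2 ! (P0 ! i) = i \<and> P0 ! (P2 ! i) = i \<and> P3 ! (P1 ! i) = i \<and> P1 ! (P3 ! i) = i)"

lemma cover_table_cover:
  assumes ok: "inverse_tables n P0 P1 P2 P3"
  shows "cover (table_cover n P0 P1 P2 P3)"
  unfolding cover_def
proof (intro allI)
  fix v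
  let ?s = "table_cover n P0 P1 P2 P3"
  have n: "0 < n" and tab: "\<And>i. i < n \<Longrightarrow> P0 ! i < n \<and> P1 ! i < n \<and> P2 ! i < n \<and> P3 ! i < n \<and>
      P2 ! (P0 ! i) = i \<and> P0 ! (P2 ! i) = i \<and> P3 ! (P1 ! i) = i \<and> P1 ! (P3 ! i) = i"
    using ok by (auto simp: inverse_tables_def)
  have P30: "P3 ! 0 < n" "P1 ! (P3 ! 0) = 0"
    using tab[OF n] by auto
  show "?s 2 (?s 0 v) = v \<and> ?s 0 (?s 2 v) = v \<and> ?s 3 (?s 1 v) = v \<and> ?s 1 (?s 3 v) = v"
  proof (cases v)
    case (Inl i)
    show ?thesis
    proof (cases "i < n")
      case True
      have "P1 ! i \<noteq> 0" if "i \<noteq> P3 ! 0"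
        using that tab[OF True] P30 by metis
      moreover have "P3 ! i \<noteq> P3 ! 0" if "i \<noteq> 0"
        using that tab[OF True] tab[OF n] by metis
      ultimately show ?thesis
        using Inl True tab[OF True] tab[OF n] P30 by (auto simp: table_cover_def)
    qed (simp add: Inl table_cover_def)
  qed (use P30 in \<open>simp add: table_cover_def\<close>)
qed

definition lookup_voltage :: "('k \<times> 'l set) list \<Rightarrow> 'k \<Rightarrow> 'l set" where
  "lookup_voltage L x = (case map_of L x of Some U \<Rightarrow> U | None \<Rightarrow> {})"

definition table_voltage_a :: "(nat \<times> (nat + nat) set) list \<Rightarrow> nat + int \<Rightarrow> (nat + nat) set" where
  "table_voltage_a L v = (case v of Inl i \<Rightarrow> lookup_voltage L i | Inr j \<Rightarrow> {})"

(* The b-loop at Inr j, j > 0, carries the label Inr j; z_j crosses it once. *)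
definition table_voltage_b :: "(nat \<times> (nat + nat) set) list \<Rightarrow> nat + int \<Rightarrow> (nat + nat) set" where
  "table_voltage_b L v =
     (case v of Inl i \<Rightarrow> lookup_voltage L i | Inr j \<Rightarrow> (if 0 < j then {Inr (nat j)} else {}))"

definition prod_voltage_a ::
    "((nat \<times> nat) \<times> (nat + nat) set) list \<Rightarrow> (nat + int) \<times> (nat + int) \<Rightarrow> (nat + nat) set" where
  "prod_voltage_a L x = (case x of (Inl i, Inl j) \<Rightarrow> lookup_voltage L (i, j) | _ \<Rightarrow> {})"

definition prod_voltage_b ::
    "((nat \<times> nat) \<times> (nat + nat) set) list \<Rightarrow> (nat + int) \<times> (nat + int) \<Rightarrow> (nat + nat) set" where
  "prod_voltage_b L x = (case x of
     (Inl i, Inl j) \<Rightarrow> lookup_voltage L (i, j)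
   | (Inr i, Inr j) \<Rightarrow> (if i = j \<and> 0 < i then {Inr (nat i)} else {})
   | _ \<Rightarrow> {})"

lemma table_cover_walk_z_code:
  assumes "0 < n" "0 < j"
  shows "cover_walk (table_cover n P0 P1 P2 P3) (table_voltage_a LA) (table_voltage_b LB)
      (z_code j) (Inl 0, {}) = (Inl 0, {Inr j})"
proof -
  let ?w = "cover_walk (table_cover n P0 P1 P2 P3) (table_voltage_a LA) (table_voltage_b LB)"
  have up: "?w (replicate i 2) (Inr k, U) = (Inr (k + int i), U)" for i k U
    by (induction i) (auto simp: cover_step_def edge_voltage_def table_cover_def table_voltage_a_def)
  have down: "?w (replicate i 0) (Inr (k + int i), U) = (Inr k, U)" for i k U
  proof (induction i arbitrary: k)
    case (Suc i)
    have "k + int (Suc i) = (k + 1) + int i" by simp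
    with Suc[of "k + 1"] show ?case
      by (simp only:) (simp add: cover_step_def edge_voltage_def table_cover_def table_voltage_a_def)
  qed simp
  show ?thesis
    using up[of j 0 "{}"] down[of j 0 "{Inr j}"] assms
    by (simp add: z_code_def cover_walk_append cover_step_def edge_voltage_def table_cover_def
        table_voltage_b_def)
qed

lemma prod_cover_walk_z_code:
  assumes "0 < n" "0 < n'" "0 < j"
  shows "cover_walk (prod_cover (table_cover n P0 P1 P2 P3) (table_cover n' Q0 Q1 Q2 Q3))
      (prod_voltage_a LA) (prod_voltage_b LB) (z_code j) ((Inl 0, Inl 0), {}) =
    ((Inl 0, Inl 0), {Inr j})"
proof -
  let ?w = "cover_walk (prod_cover (table_cover n P0 P1 P2 P3) (table_cover n' Q0 Q1 Q2 Q3))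
      (prod_voltage_a LA) (prod_voltage_b LB)"
  have up: "?w (replicate i 2) ((Inr k, Inr k), U) = ((Inr (k + int i), Inr (k + int i)), U)" for i k U
    by (induction i)
      (auto simp: cover_step_def edge_voltage_def table_cover_def prod_cover_def prod_voltage_a_def)
  have down: "?w (replicate i 0) ((Inr (k + int i), Inr (k + int i)), U) = ((Inr k, Inr k), U)" for i k U
  proof (induction i arbitrary: k)
    case (Suc i)
    have "k + int (Suc i) = (k + 1) + int i" by simp
    with Suc[of "k + 1"] show ?case
      by (simp only:) (simp add: cover_step_def edge_voltage_def table_cover_def prod_cover_def
          prod_voltage_a_def)
  qed simp
  show ?thesis
    using up[of j 0 "{}"] down[of j 0 "{Inr j}"] assms
    by (simp add: z_code_def cover_walk_append cover_step_def edge_voltage_def table_cover_def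
        prod_cover_def prod_voltage_b_def)
qed

section \<open>The counterexample\<close>

(* The words h_1, ..., h_5 and k_1, ..., k_5 are H_codes and K_codes. The five words in I_codes
   lie in H and in K: I_in_H ! i and I_in_K ! i write the i-th of them as a word in the h's and
   in the k's, (j, False) standing for the inverse of the j-th generator. In each cover the label
   Inl i marks the i-th of the chosen generators. *)
definition H_cover :: "nat \<Rightarrow> nat + int \<Rightarrow> nat + int" where
  "H_cover = table_cover 16
     [1, 0, 3, 2, 11, 5, 15, 4, 14, 13, 6, 7, 9, 10, 8, 12]
     [0, 2, 1, 14, 3, 12, 7, 4, 8, 5, 6, 10, 9, 15, 13, 11]
     [1, 0, 3, 2, 7, 5, 10, 11, 14, 12, 13, 4, 15, 9, 8, 6]
     [0, 2, 1, 4, 7, 9, 10, 6, 8, 12, 11, 15, 5, 14, 3, 13]"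

definition H_a :: "nat + int \<Rightarrow> (nat + nat) set" where
  "H_a = table_voltage_a [(5, {Inl 1}), (6, {Inl 5}), (14, {Inl 3})]"

definition H_b :: "nat + int \<Rightarrow> (nat + nat) set" where
  "H_b = table_voltage_b [(5, {Inl 4}), (10, {Inl 2})]"

definition K_cover :: "nat \<Rightarrow> nat + int \<Rightarrow> nat + int" where
  "K_cover = table_cover 8
     [1, 0, 7, 3, 4, 5, 2, 6] [0, 6, 5, 2, 3, 4, 1, 7] [1, 0, 6, 3, 4, 5, 7, 2] [0, 6, 3, 4, 5, 2, 1, 7]"

definition K_a :: "nat + int \<Rightarrow> (nat + nat) set" where
  "K_a = table_voltage_a [(2, {Inl 4}), (3, {Inl 1}), (5, {Inl 3})]"

definition K_b :: "nat + int \<Rightarrow> (nat + nat) set" where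
  "K_b = table_voltage_b [(5, {Inl 2}), (7, {Inl 5})]"

definition J_cover :: "nat \<Rightarrow> nat + int \<Rightarrow> nat + int" where
  "J_cover = table_cover 7
     [2, 6, 0, 1, 4, 5, 3] [0, 1, 6, 5, 2, 3, 4] [2, 3, 0, 6, 4, 5, 1] [0, 1, 4, 5, 6, 3, 2]"

definition J_a :: "nat + int \<Rightarrow> (nat + nat) set" where
  "J_a = table_voltage_a [(3, {Inl 5}), (4, {Inl 1}), (5, {Inl 2})]"

definition J_b :: "nat + int \<Rightarrow> (nat + nat) set" where
  "J_b = table_voltage_b [(1, {Inl 6}), (3, {Inl 2, Inl 4}), (6, {Inl 3})]"

definition I_cover :: "nat \<Rightarrow> (nat + int) \<times> (nat + int) \<Rightarrow> (nat + int) \<times> (nat + int)" where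
  "I_cover = prod_cover H_cover K_cover"

definition I_a :: "(nat + int) \<times> (nat + int) \<Rightarrow> (nat + nat) set" where
  "I_a = prod_voltage_a [((4, 5), {Inl 5}), ((14, 3), {Inl 3}), ((14, 5), {Inl 4})]"

definition I_b :: "(nat + int) \<times> (nat + int) \<Rightarrow> (nat + nat) set" where
  "I_b = prod_voltage_b [((4, 5), {Inl 1}), ((10, 2), {Inl 2})]"

definition H_codes :: "nat list list" where
  "H_codes =
    [[0, 3, 2, 3, 3, 0, 3, 0, 1, 2, 1, 1, 0, 1, 2],
     [0, 3, 2, 1, 1, 1, 1, 1, 0, 3, 0, 1, 2],
     [0, 3, 2, 3, 0, 0, 1, 0, 1, 2],
     [0, 3, 2, 3, 3, 0, 1, 1, 1, 2, 1, 1, 0, 1, 2],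
     [0, 3, 2, 3, 3, 3, 0, 3, 3, 3, 0, 1, 2]]"

definition K_codes :: "nat list list" where
  "K_codes =
    [[0, 3, 2, 1, 0, 3, 0, 1, 2],
     [0, 3, 2, 1, 1, 1, 1, 0, 1, 2],
     [0, 3, 2, 3, 0, 1, 0, 1, 2],
     [0, 3, 0, 0, 0, 1, 2],
     [0, 3, 0, 1, 2, 1, 2]]"

definition I_codes :: "nat list list" where
  "I_codes =
    [[0, 3, 2, 1, 1, 1, 2, 1, 1, 1, 1, 1, 1, 2, 1, 1, 1, 0, 1, 2],
     [0, 3, 2, 1, 1, 1, 1, 1, 0, 3, 0, 1, 2],
     [0, 3, 2, 1, 1, 1, 2, 1, 1, 0, 0, 3, 3, 0, 3, 3, 3, 0, 1, 2],
     [0, 3, 2, 3, 0, 0, 1, 0, 1, 2],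
     [0, 3, 2, 3, 3, 3, 0, 1, 1, 0, 1, 1, 2, 1, 1, 1, 0, 1, 2]]"

definition I_in_H :: "(nat \<times> bool) list list" where
  "I_in_H = [[(4, False), (4, False)], [(1, True)], [(4, False), (2, True), (4, True)], [(2, True)],
     [(4, True), (1, True), (4, False)]]"

definition I_in_K :: "(nat \<times> bool) list list" where
  "I_in_K =
    [[(1, True), (2, False), (1, True), (0, False), (1, True)], [(1, True), (0, True)],
     [(1, True), (2, False), (0, True), (0, True), (2, True), (1, False)], [(2, True), (2, True)],
     [(1, False), (0, True), (1, True), (2, True), (0, False), (1, True)]]"

lemmas cover_data_defs =
  H_cover_def H_a_def H_b_def K_cover_def K_a_def K_b_def J_cover_def J_a_def J_b_def
  I_cover_def I_a_def I_b_def prod_cover_def table_cover_def table_voltage_a_def table_voltage_b_def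
  prod_voltage_a_def prod_voltage_b_def lookup_voltage_def cover_step_def edge_voltage_def

lemma covers: "cover H_cover" "cover K_cover" "cover J_cover" "cover I_cover"
proof -
  show H: "cover H_cover" and K: "cover K_cover" and "cover J_cover"
    unfolding H_cover_def K_cover_def J_cover_def
    by (rule cover_table_cover, simp add: inverse_tables_def less_Suc_eq numeral_eq_Suc)+
  show "cover I_cover"
    unfolding I_cover_def using H K by (rule cover_prod_cover)
qed

lemma codes_below_4:
  "\<forall>w\<in>set H_codes. \<forall>c\<in>set w. c < 4" "\<forall>w\<in>set K_codes. \<forall>c\<in>set w. c < 4"
  "\<forall>w\<in>set I_codes. \<forall>c\<in>set w. c < 4"
  by (simp_all add: H_codes_def K_codes_def I_codes_def)

lemma z_code_walks:
  assumes "0 < j"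
  shows "cover_walk H_cover H_a H_b (z_code j) (Inl 0, {}) = (Inl 0, {Inr j})"
    and "cover_walk K_cover K_a K_b (z_code j) (Inl 0, {}) = (Inl 0, {Inr j})"
    and "cover_walk J_cover J_a J_b (z_code j) (Inl 0, {}) = (Inl 0, {Inr j})"
    and "cover_walk I_cover I_a I_b (z_code j) ((Inl 0, Inl 0), {}) = ((Inl 0, Inl 0), {Inr j})"
  using assms
  unfolding H_cover_def H_a_def H_b_def K_cover_def K_a_def K_b_def J_cover_def J_a_def J_b_def
    I_cover_def I_a_def I_b_def
  by (simp_all add: table_cover_walk_z_code prod_cover_walk_z_code)

lemma H_codes_walk:
  "map (\<lambda>w. cover_walk H_cover H_a H_b w (Inl 0, {})) H_codes = map (\<lambda>i. (Inl 0, {Inl (Suc i)})) [0..<5]"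
  by (simp add: H_codes_def cover_data_defs upt_rec)

lemma K_codes_walk:
  "map (\<lambda>w. cover_walk K_cover K_a K_b w (Inl 0, {})) K_codes = map (\<lambda>i. (Inl 0, {Inl (Suc i)})) [0..<5]"
  by (simp add: K_codes_def cover_data_defs upt_rec)

lemma I_codes_walk:
  "map (\<lambda>w. cover_walk I_cover I_a I_b w ((Inl 0, Inl 0), {})) I_codes =
   map (\<lambda>i. ((Inl 0, Inl 0), {Inl (Suc i)})) [0..<5]"
  by (simp add: I_codes_def cover_data_defs upt_rec)

lemma J_codes_walk_vertex:
  "\<forall>w\<in>set H_codes \<union> set K_codes. fst (cover_walk J_cover J_a J_b w (Inl 0, {})) = Inl 0"
  by (simp add: H_codes_def K_codes_def cover_data_defs)

lemma J_codes_walk_voltage: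
  "map (\<lambda>w. cover_walk J_cover J_a J_b w (Inl 0, {}))
     [H_codes ! 0, H_codes ! 1, H_codes ! 3, H_codes ! 4, K_codes ! 3, K_codes ! 4] =
   map (\<lambda>i. (Inl 0, {Inl (Suc i)})) [0..<6]"
  by (simp add: H_codes_def K_codes_def cover_data_defs upt_rec) auto

lemma I_in_indices:
  "\<forall>e\<in>set I_in_H. fst ` set e \<subseteq> {..<length H_codes}" "\<forall>e\<in>set I_in_K. fst ` set e \<subseteq> {..<length K_codes}"
  by (simp_all add: I_in_H_def I_in_K_def H_codes_def K_codes_def)

lemma J_witness_codes:
  "set [H_codes ! 0, H_codes ! 1, H_codes ! 3, H_codes ! 4, K_codes ! 3, K_codes ! 4] \<subseteq> set H_codes \<union> set K_codes"
  by (simp add: H_codes_def K_codes_def)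

context free_basis_pair
begin

lemma I_codes_in_H:
  "map (\<lambda>e. reduce (subst_word (\<lambda>j. code_word (H_codes ! j)) e)) I_in_H = map code_word I_codes"
  using a_ne_b
  by (simp add: I_in_H_def H_codes_def I_codes_def code_word_def subst_word_def inv_word_def cancels_def)

lemma I_codes_in_K:
  "map (\<lambda>e. reduce (subst_word (\<lambda>j. code_word (K_codes ! j)) e)) I_in_K = map code_word I_codes"
  using a_ne_b
  by (simp add: I_in_K_def K_codes_def I_codes_def code_word_def subst_word_def inv_word_def cancels_def)

lemma grank_H: "grank F (code_subgroup H_codes n) = enat (5 + n)"
  by (rule grank_code_subgroup[OF covers(1) z_code_walks(1) codes_below_4(1) H_codes_walk])

lemma grank_K: "grank F (code_subgroup K_codes n) = enat (5 + n)"
  by (rule grank_code_subgroup[OF covers(2) z_code_walks(2) codes_below_4(2) K_codes_walk])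

lemma grank_inter: "enat (5 + n) \<le> grank F (code_subgroup H_codes n \<inter> code_subgroup K_codes n)"
proof (rule grank_ge_voltages[OF covers(4)])
  let ?HK = "code_subgroup H_codes n \<inter> code_subgroup K_codes n"
  have "?HK \<subseteq> stabilizer H_cover H_a H_b (Inl 0) \<inter> stabilizer K_cover K_a K_b (Inl 0)"
    using code_subgroup_stabilizer[OF covers(1) z_code_walks(1) codes_below_4(1)
        walk_map_vertex[OF H_codes_walk]]
      code_subgroup_stabilizer[OF covers(2) z_code_walks(2) codes_below_4(2)
        walk_map_vertex[OF K_codes_walk]]
    by blast
  then show "?HK \<subseteq> stabilizer I_cover I_a I_b (Inl 0, Inl 0)"
    using stabilizer_prod_cover[OF covers(1,2)] unfolding I_cover_def by blast
  have in_HK: "word_val F (code_word w) \<in> ?HK" if "w \<in> set I_codes" for w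
    using code_word_in_code_subgroup[OF I_codes_in_H I_in_indices(1) that]
      code_word_in_code_subgroup[OF I_codes_in_K I_in_indices(2) that] by blast
  fix i :: nat assume "i < 5"
  then obtain w where "w \<in> set I_codes"
    and "cover_walk I_cover I_a I_b w ((Inl 0, Inl 0), {}) = ((Inl 0, Inl 0), {Inl (Suc i)})"
    using map_eq_map_upt_witness[OF I_codes_walk] by blast
  then show "\<exists>g\<in>?HK. voltage I_cover I_a I_b (Inl 0, Inl 0) g = {Inl (Suc i)}"
    using in_HK code_word_stabilizer[OF covers(4)] codes_below_4(3) by blast
next
  fix j assume "j \<in> {1..n}"
  then show "\<exists>g\<in>code_subgroup H_codes n \<inter> code_subgroup K_codes n.
      voltage I_cover I_a I_b (Inl 0, Inl 0) g = {Inr j}"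
    using z_gen_stabilizer[OF covers(4) z_code_walks(4)]
    by (auto simp: code_subgroup_def intro!: bexI[of _ "z_gen j"] generate.incl)
qed

lemma grank_join:
  "enat (6 + n) \<le> grank F (generate F (code_subgroup H_codes n \<union> code_subgroup K_codes n))"
proof (rule grank_ge_voltages[OF covers(3)])
  let ?HK = "generate F (code_subgroup H_codes n \<union> code_subgroup K_codes n)"
  have H: "code_subgroup H_codes n \<subseteq> stabilizer J_cover J_a J_b (Inl 0)"
    using J_codes_walk_vertex
    by (intro code_subgroup_stabilizer[OF covers(3) z_code_walks(3) codes_below_4(1)]) auto
  have K: "code_subgroup K_codes n \<subseteq> stabilizer J_cover J_a J_b (Inl 0)"
    using J_codes_walk_vertex
    by (intro code_subgroup_stabilizer[OF covers(3) z_code_walks(3) codes_below_4(2)]) auto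
  show "?HK \<subseteq> stabilizer J_cover J_a J_b (Inl 0)"
    using H K by (intro generate_subgroup_incl[OF _ subgroup_stabilizer[OF covers(3)]]) blast
  have gens: "word_val F (code_word w) \<in> ?HK" if "w \<in> set H_codes \<union> set K_codes" for w
    using that unfolding code_subgroup_def by (blast intro: generate.incl)
  fix i :: nat assume "i < 6"
  then obtain w where "w \<in> set H_codes \<union> set K_codes"
    and "cover_walk J_cover J_a J_b w (Inl 0, {}) = (Inl 0, {Inl (Suc i)})"
    using map_eq_map_upt_witness[OF J_codes_walk_voltage] J_witness_codes by blast
  then show "\<exists>g\<in>?HK. voltage J_cover J_a J_b (Inl 0) g = {Inl (Suc i)}"
    using gens code_word_stabilizer[OF covers(3)] codes_below_4(1,2) by blast
next
  fix j assume j: "j \<in> {1..n}"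
  then have "z_gen j \<in> generate F (code_subgroup H_codes n \<union> code_subgroup K_codes n)"
    unfolding code_subgroup_def by (blast intro: generate.incl)
  moreover have "voltage J_cover J_a J_b (Inl 0) (z_gen j) = {Inr j}"
    using z_gen_stabilizer[OF covers(3) z_code_walks(3), of j] j by simp
  ultimately show "\<exists>g\<in>generate F (code_subgroup H_codes n \<union> code_subgroup K_codes n).
      voltage J_cover J_a J_b (Inl 0) g = {Inr j}"
    by blast
qed

theorem rank_counterexample:
  assumes "5 \<le> m"
  shows "\<exists>H K. subgroup H F \<and> subgroup K F \<and>
           grank F H = enat m \<and> grank F K = enat m \<and>
           grank F (H \<inter> K) \<ge> enat m \<and>
           grank F (generate F (H \<union> K)) > enat m"
proof (intro exI conjI)
  let ?n = "m - 5"
  have m: "5 + ?n = m" "6 + ?n = Suc m"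
    using assms by simp_all
  show "subgroup (code_subgroup H_codes ?n) F" "subgroup (code_subgroup K_codes ?n) F"
    by (rule subgroup_code_subgroup)+
  show "grank F (code_subgroup H_codes ?n) = enat m" "grank F (code_subgroup K_codes ?n) = enat m"
    using grank_H grank_K m by simp_all
  show "enat m \<le> grank F (code_subgroup H_codes ?n \<inter> code_subgroup K_codes ?n)"
    using grank_inter m by metis
  show "enat m < grank F (generate F (code_subgroup H_codes ?n \<union> code_subgroup K_codes ?n))"
    using grank_join[of ?n] m by (simp add: Suc_ile_eq)
qed

end

theorem corollary1p2:
  fixes F :: "('a, 'b) monoid_scheme" and m :: nat
  assumes "free_group F"
    and "\<exists>a\<in>carrier F. \<exists>b\<in>carrier F. a \<otimes>\<^bsub>F\<^esub> b \<noteq> b \<otimes>\<^bsub>F\<^esub> a"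
    and "m \<ge> 5"
  shows "\<exists>H K. subgroup H F \<and> subgroup K F \<and>
           grank F H = enat m \<and> grank F K = enat m \<and>
           grank F (H \<inter> K) \<ge> enat m \<and>
           grank F (generate F (H \<union> K)) > enat m"
proof -
  obtain B where group: "group F" and basis: "free_basis F B"
    using assms(1) by (auto simp: free_group_def)
  obtain a b where "a \<in> B" "b \<in> B" "a \<noteq> b"
    using group.free_basis_distinct_elements[OF group basis assms(2)] by blast
  then interpret free_basis_pair F B a b
    using group basis by (simp add: free_basis_pair_def free_basis_pair_axioms_def)
  show ?thesis
    using rank_counterexample assms(3) by blast
qed

end
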